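(* Let $K$ be a finite field and let $d$ be an integer with $\gcd(d,|K|-1)=1$. For every $b\in K$ with $b\neq 1$, $$\sum_{a\in K^\times}W_{K,d}(a)\,W_{K,d}(ba)=0.$$
   Context: Let $p$ be the characteristic of $K$. $\psi_K(x)=\exp(2\pi i\,\mathrm{Tr}_{K/\mathbb{F}_p}(x)/p)$ and $W_{K,d}(a)=\sum_{x\in K}\psi_K(x^d+ax)$ for $a\in K$. *)

theory Defs
  imports Complex_Main
begin

definition ff_degree :: "'a::{finite,field} itself \<Rightarrow> nat" where
  "ff_degree T = (THE n. CHAR('a) ^ n = card (UNIV::'a set))"

text \<open>Absolute trace Tr_{K/F_p}(x) = sum of x^(p^i), i < n; its value lies in the prime field.\<close>
definition ff_trace :: "'a::{finite,field} \<Rightarrow> 'a" where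
  "ff_trace x = (\<Sum>i<ff_degree TYPE('a). x ^ (CHAR('a) ^ i))"

text \<open>The canonical additive character: the prime-field element Tr(x) is identified with
  the unique k in {0..p-1} with of_nat k = Tr(x).\<close>
definition ff_psi :: "'a::{finite,field} \<Rightarrow> complex" where
  "ff_psi x = exp (2 * pi * \<i> *
      of_nat (THE k. k < CHAR('a) \<and> of_nat k = ff_trace x) / of_nat CHAR('a))"

definition ff_W :: "nat \<Rightarrow> 'a::{finite,field} \<Rightarrow> complex" where
  "ff_W d a = (\<Sum>x\<in>(UNIV::'a set). ff_psi (x ^ d + a * x))"

end

theory Submission
  imports Defs "HOL-Algebra.Sylow" "HOL-Computational_Algebra.Polynomial" "HOL-Number_Theory.Cong"
begin

text \<open>The trace is additive, Frobenius-invariant and not identically zero, so \<open>\<psi>\<close> is a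
  nontrivial additive character and \<open>\<Sum>\<^sub>a \<psi>(a t)\<close> over \<open>K\<^sup>\<times>\<close> equals \<open>q[t = 0] - 1\<close>.
  Expanding the product and summing over \<open>a\<close> first gives
  \<open>q \<Sum>\<^sub>y \<psi>(((-b)\<^sup>d + 1) y\<^sup>d) - (\<Sum>\<^sub>x \<psi>(x\<^sup>d))\<^sup>2\<close>.
  Since \<open>x \<mapsto> x\<^sup>d\<close> permutes \<open>K\<close>, both sums are complete character sums with nonzero
  coefficient (\<open>(-b)\<^sup>d = -1 = (-1)\<^sup>d\<close> would force \<open>b = 1\<close>), hence vanish.\<close>

lemma prime_CHAR_finite_idom: "prime CHAR('a::{finite,idom})"
  by (rule prime_CHAR_semidom) (simp add: finite_imp_CHAR_pos)

text \<open>Cauchy's theorem (via Sylow) for the additive group gives a subgroup \<open>H\<close> of order \<open>r\<close>;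
  translation by a nonzero \<open>x \<in> H\<close> permutes \<open>H\<close>, so \<open>r x = 0\<close>.\<close>
lemma prime_dvd_card_UNIV_imp_eq_CHAR:
  assumes r: "prime r" and dvd: "r dvd card (UNIV::'a::{finite,field} set)"
  shows "r = CHAR('a)"
proof -
  define G :: "'a monoid" where "G = \<lparr>carrier = UNIV, monoid.mult = (+), one = 0\<rparr>"
  have group: "group G"
    unfolding G_def by (rule groupI) (auto simp: add.assoc intro: exI[of _ "- x" for x])
  have order: "Coset.order G = r ^ 1 * (card (UNIV::'a set) div r)"
    using dvd by (simp add: Coset.order_def G_def)
  obtain H where H: "subgroup H G" "card H = r"
    using sylow_thm[OF r group order] by (auto simp: G_def)
  have closed: "x + y \<in> H" if "x \<in> H" "y \<in> H" for x y
    using H(1) that unfolding subgroup_def G_def by auto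
  have "card H \<ge> 2"
    using H(2) r prime_ge_2_nat by auto
  then have "\<not> H \<subseteq> {0}"
    using card_mono[of "{0::'a}" H] by auto
  then obtain x where x: "x \<in> H" "x \<noteq> 0"
    by blast
  have "(\<lambda>y. x + y) ` H = H"
    by (rule endo_inj_surj) (auto simp: inj_on_def closed x)
  then have "(\<Sum>y\<in>H. y) = (\<Sum>y\<in>H. x + y)"
    by (intro sum.reindex_bij_betw[symmetric]) (simp add: bij_betw_def inj_on_def)
  also have "\<dots> = of_nat r * x + (\<Sum>y\<in>H. y)"
    using H(2) by (simp add: sum.distrib)
  finally have "of_nat r * x = 0"
    by simp
  then have "(of_nat r :: 'a) = 0"
    using x by simp
  then have "CHAR('a) dvd r"
    by (simp add: of_nat_eq_0_iff_char_dvd)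
  with r prime_CHAR_finite_idom show ?thesis
    by (metis primes_dvd_imp_eq)
qed

lemma ex_card_UNIV_eq_CHAR_power: "\<exists>n. card (UNIV::'a::{finite,field} set) = CHAR('a) ^ n"
proof -
  let ?q = "card (UNIV::'a set)"
  have q: "?q > 0"
    by (simp add: card_gt_0_iff)
  have "prime_factors ?q \<subseteq> {CHAR('a)}"
    using prime_dvd_card_UNIV_imp_eq_CHAR[where 'a='a] by (auto simp: in_prime_factors_iff)
  then consider "prime_factors ?q = {}" | "prime_factors ?q = {CHAR('a)}"
    by blast
  then show ?thesis
  proof cases
    case 1
    then have "?q = 1"
      using q by (metis prod_mset_empty prod_mset_prime_factorization_nat set_mset_eq_empty_iff not_gr0)
    then show ?thesis
      by (intro exI[of _ 0]) simp
  next
    case 2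
    then have "?q = CHAR('a) ^ multiplicity (CHAR('a)) ?q"
      using prod_prime_factors[of ?q] q by simp
    then show ?thesis
      by blast
  qed
qed

lemma card_UNIV_eq_CHAR_power_ff_degree:
  "card (UNIV::'a::{finite,field} set) = CHAR('a) ^ ff_degree TYPE('a)"
proof -
  have "CHAR('a) > 1"
    using prime_CHAR_finite_idom prime_gt_1_nat by blast
  then have "\<exists>!n. CHAR('a) ^ n = card (UNIV::'a set)"
    using ex_card_UNIV_eq_CHAR_power[where 'a='a] power_inject_exp by metis
  then show ?thesis
    unfolding ff_degree_def by (metis (mono_tags, lifting) theI')
qed

lemma power_card_UNIV_minus_one:
  assumes "(x::'a::{finite,field}) \<noteq> 0"
  shows "x ^ (card (UNIV::'a set) - 1) = 1"
proof -
  let ?U = "UNIV - {0::'a}"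
  have card_U: "card ?U = card (UNIV::'a set) - 1"
    by (simp add: card_Diff_singleton)
  have "(\<Prod>y\<in>?U. x * y) = (\<Prod>y\<in>?U. y)"
    by (rule prod.reindex_bij_witness[of _ "\<lambda>y. y / x" "\<lambda>y. x * y"]) (use assms in auto)
  then have "x ^ card ?U * (\<Prod>y\<in>?U. y) = 1 * (\<Prod>y\<in>?U. y)"
    by (simp add: prod.distrib)
  moreover have "(\<Prod>y\<in>?U. y) \<noteq> 0"
    by simp
  ultimately show ?thesis
    unfolding card_U by (metis mult_right_cancel)
qed

lemma power_card_UNIV_eq_self: "(x::'a::{finite,field}) ^ card (UNIV::'a set) = x"
proof -
  have "card (UNIV::'a set) = Suc (card (UNIV::'a set) - 1)"
    by (simp add: card_gt_0_iff)
  then show ?thesis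
    by (cases "x = 0") (metis power_0_Suc, metis power_Suc power_card_UNIV_minus_one mult_1_right)
qed

lemma inj_on_of_nat_lessThan_CHAR: "inj_on (of_nat :: nat \<Rightarrow> 'a::semiring_1_cancel) {..<CHAR('a)}"
  by (auto intro!: inj_onI cong_less_modulus_unique_nat simp: of_nat_eq_iff_cong_CHAR)

lemma of_nat_mod_CHAR: "(of_nat (m mod CHAR('a)) :: 'a::semiring_1_cancel) = of_nat m"
  by (simp add: of_nat_eq_iff_cong_CHAR cong_def)

lemma of_nat_power_CHAR:
  assumes "prime CHAR('a::comm_semiring_1)"
  shows "(of_nat k :: 'a) ^ CHAR('a) = of_nat k"
proof (induction k)
  case 0
  show ?case
    using assms by (simp add: prime_gt_0_nat power_0_left)
next
  case (Suc k)
  then show ?case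
    by (simp add: freshmans_dream[OF assms refl])
qed

text \<open>The \<open>p\<close> elements \<open>of_nat k\<close>, \<open>k < p\<close>, are roots of \<open>X\<^sup>p - X\<close>, which has at most \<open>p\<close> roots.\<close>
lemma power_CHAR_eq_self_imp_of_nat:
  fixes y :: "'a::field"
  assumes p: "prime CHAR('a)" and y: "y ^ CHAR('a) = y"
  shows "y \<in> of_nat ` {..<CHAR('a)}"
proof -
  let ?p = "CHAR('a)"
  have p2: "?p \<ge> 2"
    using p prime_ge_2_nat by blast
  define P :: "'a poly" where "P = [:0, -1:] + monom 1 ?p"
  have degree_P: "degree P = ?p"
    unfolding P_def using p2 by (subst degree_add_eq_right) (auto simp: degree_monom_eq)
  then have "P \<noteq> 0"
    using p2 by auto
  let ?F = "of_nat ` {..<?p} :: 'a set" and ?R = "{z::'a. z ^ ?p = z}"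
  have roots_P: "{z. poly P z = 0} = ?R"
    by (simp add: P_def poly_monom)
  have "?F \<subseteq> ?R"
    using of_nat_power_CHAR[OF p] by auto
  moreover have "finite ?R"
    using poly_roots_finite[OF \<open>P \<noteq> 0\<close>] by (simp add: roots_P)
  moreover have "card ?R \<le> card ?F"
    using card_poly_roots_bound[OF \<open>P \<noteq> 0\<close>] degree_P inj_on_of_nat_lessThan_CHAR[where 'a='a]
    by (simp add: roots_P card_image)
  ultimately have "?F = ?R"
    by (intro card_subset_eq) (auto intro: antisym card_mono)
  with y show ?thesis
    by blast
qed

section \<open>The absolute trace\<close>

lemma ff_trace_add: "ff_trace (x + y) = ff_trace x + ff_trace (y::'a::{finite,field})"
  unfolding ff_trace_def by (simp add: freshmans_dream'[OF prime_CHAR_finite_idom] sum.distrib)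

lemma ff_trace_power_CHAR: "ff_trace (x::'a::{finite,field}) ^ CHAR('a) = ff_trace x"
proof -
  let ?p = "CHAR('a)" and ?n = "ff_degree TYPE('a)"
  have "ff_trace x ^ ?p = (\<Sum>i<?n. (x ^ (?p ^ i)) ^ ?p)"
    unfolding ff_trace_def by (rule freshmans_dream_sum[OF prime_CHAR_finite_idom refl])
  also have "\<dots> = (\<Sum>i<?n. x ^ (?p ^ Suc i))"
    by (simp add: power_mult[symmetric] mult.commute)
  also have "\<dots> = (\<Sum>i<Suc ?n. x ^ (?p ^ i)) - x"
    by (subst sum.lessThan_Suc_shift) simp
  also have "\<dots> = (\<Sum>i<?n. x ^ (?p ^ i)) + x ^ (?p ^ ?n) - x"
    by simp
  also have "x ^ (?p ^ ?n) = x"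
    using power_card_UNIV_eq_self card_UNIV_eq_CHAR_power_ff_degree by metis
  finally show ?thesis
    unfolding ff_trace_def by simp
qed

text \<open>The trace is a polynomial in \<open>x\<close> of degree \<open>p\<^sup>n\<^sup>-\<^sup>1 < q\<close>, so it cannot vanish on all of \<open>K\<close>.\<close>
lemma ex_ff_trace_nonzero: "\<exists>x::'a::{finite,field}. ff_trace x \<noteq> 0"
proof (rule ccontr)
  assume all_zero: "\<nexists>x::'a. ff_trace x \<noteq> 0"
  let ?p = "CHAR('a)" and ?n = "ff_degree TYPE('a)"
  have p2: "?p \<ge> 2"
    using prime_CHAR_finite_idom prime_ge_2_nat by blast
  have "card {0::'a, 1} \<le> card (UNIV::'a set)"
    by (rule card_mono) auto
  then have n1: "?n \<ge> 1"
    using card_UNIV_eq_CHAR_power_ff_degree[where 'a='a] by (cases ?n) auto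
  define T :: "'a poly" where "T = (\<Sum>i<?n. monom 1 (?p ^ i))"
  have poly_T: "poly T x = ff_trace x" for x
    by (simp add: T_def poly_sum poly_monom ff_trace_def)
  have degree_T: "degree T \<le> ?p ^ (?n - 1)"
    unfolding T_def
  proof (rule degree_sum_le)
    fix i assume "i \<in> {..<?n}"
    then have "?p ^ i \<le> ?p ^ (?n - 1)"
      using p2 by (intro power_increasing) auto
    then show "degree (monom (1::'a) (?p ^ i)) \<le> ?p ^ (?n - 1)"
      by (simp add: degree_monom_eq)
  qed simp
  have "coeff T (?p ^ (?n - 1)) = (\<Sum>i<?n. if ?p ^ (?n - 1) = ?p ^ i then 1 else 0)"
    by (simp add: T_def coeff_sum coeff_monom eq_commute)
  also have "\<dots> = (\<Sum>i\<in>{?n - 1}. 1)"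
    using p2 n1 by (intro sum.mono_neutral_cong_right) (auto simp: power_inject_exp)
  finally have "T \<noteq> 0"
    by auto
  have "card (UNIV::'a set) \<le> ?p ^ (?n - 1)"
    using card_poly_roots_bound[OF \<open>T \<noteq> 0\<close>] degree_T all_zero by (simp add: poly_T)
  moreover have "?p ^ (?n - 1) < ?p ^ ?n"
    using p2 n1 by (intro power_strict_increasing) auto
  ultimately show False
    using card_UNIV_eq_CHAR_power_ff_degree[where 'a='a] by simp
qed

definition ff_trace_nat :: "'a::{finite,field} \<Rightarrow> nat" where
  "ff_trace_nat x = (THE k. k < CHAR('a) \<and> of_nat k = ff_trace x)"

lemma ff_trace_nat_spec:
  "ff_trace_nat x < CHAR('a) \<and> (of_nat (ff_trace_nat x) :: 'a::{finite,field}) = ff_trace x"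
proof -
  have "\<exists>!k. k < CHAR('a) \<and> (of_nat k :: 'a) = ff_trace x"
    using power_CHAR_eq_self_imp_of_nat[OF prime_CHAR_finite_idom ff_trace_power_CHAR[of x]]
      inj_on_of_nat_lessThan_CHAR[where 'a='a]
    by (auto simp: inj_on_def)
  then show ?thesis
    unfolding ff_trace_nat_def by (rule theI')
qed

lemma ff_trace_nat_eqI:
  "k < CHAR('a) \<Longrightarrow> (of_nat k :: 'a::{finite,field}) = ff_trace x \<Longrightarrow> ff_trace_nat x = k"
  using ff_trace_nat_spec[of x] inj_on_of_nat_lessThan_CHAR[where 'a='a] by (auto simp: inj_on_def)

section \<open>The additive character\<close>

lemma exp_2pi_i_of_nat_mod:
  assumes "p > 0"
  shows "exp (2 * pi * \<i> * of_nat (m mod p) / of_nat p) = exp (2 * pi * \<i> * of_nat m / of_nat p)"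
proof -
  have "exp (2 * pi * \<i> * of_nat m / of_nat p) =
        exp (of_nat (m div p) * (2 * pi * \<i>)) * exp (2 * pi * \<i> * of_nat (m mod p) / of_nat p)"
    using assms
    by (subst div_mult_mod_eq[of m p, symmetric], simp only: of_nat_add of_nat_mult, subst exp_add[symmetric])
       (simp add: field_simps)
  then show ?thesis
    by (simp add: exp_of_nat_mult)
qed

lemma exp_2pi_i_ne_1:
  assumes "0 < k" "k < p"
  shows "exp (2 * pi * \<i> * of_nat k / of_nat p) \<noteq> 1"
proof
  assume "exp (2 * pi * \<i> * of_nat k / of_nat p) = 1"
  then have "cis (2 * pi * k / p) = 1"
    by (simp add: cis_conv_exp mult_ac)
  then have "cos (2 * pi * k / p) = 1"
    by (simp add: complex_eq_iff)
  then obtain m :: int where "2 * pi * k / p = m * 2 * pi"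
    by (auto simp: cos_one_2pi_int)
  then have "real k / p = m"
    using assms by (simp add: field_simps)
  moreover have "0 < real k / p" "real k / p < 1"
    using assms by auto
  ultimately show False
    by (metis of_int_0_less_iff of_int_less_1_iff not_le int_one_le_iff_zero_less)
qed

lemma ff_psi_eq_exp:
  "ff_psi (x::'a::{finite,field}) = exp (2 * pi * \<i> * of_nat (ff_trace_nat x) / of_nat CHAR('a))"
  unfolding ff_psi_def ff_trace_nat_def ..

lemma ff_psi_add: "ff_psi (x + y) = ff_psi x * ff_psi (y::'a::{finite,field})"
proof -
  have p: "CHAR('a) > 0"
    using prime_CHAR_finite_idom prime_gt_0_nat by blast
  have "ff_trace_nat (x + y) = (ff_trace_nat x + ff_trace_nat y) mod CHAR('a)"
    using p ff_trace_nat_spec[of x] ff_trace_nat_spec[of y]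
    by (intro ff_trace_nat_eqI) (simp_all add: of_nat_mod_CHAR ff_trace_add)
  then have "ff_psi (x + y) =
      exp (2 * pi * \<i> * of_nat (ff_trace_nat x + ff_trace_nat y) / of_nat CHAR('a))"
    by (simp only: ff_psi_eq_exp exp_2pi_i_of_nat_mod[OF p])
  also have "\<dots> = ff_psi x * ff_psi y"
    by (simp add: ff_psi_eq_exp add_divide_distrib distrib_left exp_add)
  finally show ?thesis .
qed

lemma ff_psi_0: "ff_psi (0::'a::{finite,field}) = 1"
proof -
  have "ff_psi (0::'a) \<noteq> 0"
    by (simp add: ff_psi_eq_exp)
  then show ?thesis
    using ff_psi_add[of "0::'a" 0] by simp
qed

lemma ff_psi_ne_1:
  assumes "ff_trace (x::'a::{finite,field}) \<noteq> 0"
  shows "ff_psi x \<noteq> 1"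
proof -
  have "0 < ff_trace_nat x"
    using assms ff_trace_nat_spec[of x] by (auto intro: Nat.gr0I)
  then show ?thesis
    unfolding ff_psi_eq_exp using ff_trace_nat_spec[of x] by (intro exp_2pi_i_ne_1) auto
qed

lemma sum_ff_psi_mult:
  assumes c: "(c::'a::{finite,field}) \<noteq> 0"
  shows "(\<Sum>x\<in>UNIV. ff_psi (c * x)) = 0"
proof -
  let ?S = "\<Sum>x\<in>UNIV. ff_psi (x::'a)"
  obtain x0 :: 'a where x0: "ff_trace x0 \<noteq> 0"
    using ex_ff_trace_nonzero by blast
  have "ff_psi x0 * ?S = (\<Sum>x\<in>UNIV. ff_psi (x0 + x))"
    by (simp add: sum_distrib_left ff_psi_add)
  also have "\<dots> = ?S"
    by (rule sum.reindex_bij_witness[of _ "\<lambda>y. y - x0" "\<lambda>y. x0 + y"]) auto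
  finally have "?S = 0"
    using ff_psi_ne_1[OF x0] by (metis mult_cancel_right1)
  moreover have "(\<Sum>x\<in>UNIV. ff_psi (c * x)) = ?S"
    by (rule sum.reindex_bij_witness[of _ "\<lambda>y. y / c" "\<lambda>y. c * y"]) (use c in auto)
  ultimately show ?thesis
    by simp
qed

lemma sum_nonzero_ff_psi_mult:
  "(\<Sum>a\<in>{a::'a::{finite,field}. a \<noteq> 0}. ff_psi (a * t)) =
     (if t = 0 then of_nat (card (UNIV::'a set)) else 0) - 1"
proof -
  have "{a::'a. a \<noteq> 0} = UNIV - {0}"
    by auto
  then have "(\<Sum>a\<in>{a::'a. a \<noteq> 0}. ff_psi (a * t)) = (\<Sum>a\<in>UNIV. ff_psi (a * t)) - 1"
    by (simp add: sum_diff1 ff_psi_0)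
  also have "(\<Sum>a\<in>UNIV. ff_psi (a * t)) = (if t = 0 then of_nat (card (UNIV::'a set)) else 0)"
    using sum_ff_psi_mult[of t] by (auto simp: ff_psi_0 mult.commute)
  finally show ?thesis .
qed

lemma power_power_inverse_if_coprime:
  assumes "d \<noteq> 0" and "coprime d (card (UNIV::'a::{finite,field} set) - 1)"
  obtains u where "\<And>x::'a. (x ^ d) ^ u = x"
proof -
  let ?q = "card (UNIV::'a set)"
  obtain u v where uv: "d * u = (?q - 1) * v + 1"
    using bezout_nat[OF assms(1), of "?q - 1"] assms(2) by auto
  have "(x ^ d) ^ u = x" for x :: 'a
  proof -
    have power_eq: "(x ^ d) ^ u = (x ^ (?q - 1)) ^ v * x"
      by (simp only: power_mult[symmetric] uv power_add power_one_right)
    show ?thesis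
    proof (cases "x = 0")
      case True
      have "d * u \<noteq> 0"
        using uv by simp
      with True show ?thesis
        by (simp add: power_mult[symmetric])
    next
      case False
      with power_eq show ?thesis
        by (simp only: power_card_UNIV_minus_one[OF False] power_one mult_1_left)
    qed
  qed
  then show ?thesis
    using that by blast
qed

lemma bij_power_if_coprime:
  assumes "d \<noteq> 0" and "coprime d (card (UNIV::'a::{finite,field} set) - 1)"
  shows "bij (\<lambda>x::'a. x ^ d)"
proof -
  obtain u where u: "\<And>x::'a. (x ^ d) ^ u = x"
    using power_power_inverse_if_coprime[OF assms] by blast
  then have "inj (\<lambda>x::'a. x ^ d)"
    by (metis injI)
  then show ?thesis
    by (simp add: bij_def finite_UNIV_inj_surj)
qed

text \<open>\<open>((-1)\<^sup>d)\<^sup>2 = 1\<close>, so \<open>(-1)\<^sup>d = \<plusminus>1\<close>, and \<open>(-1)\<^sup>d = 1 = 1\<^sup>d\<close> forces \<open>-1 = 1\<close>.\<close>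
lemma minus_one_power_if_inj_power:
  assumes "inj (\<lambda>x::'a::idom. x ^ d)"
  shows "(-1::'a) ^ d = -1"
proof -
  have "((-1::'a) ^ d) ^ 2 = 1 ^ 2"
    by (simp add: power_mult[symmetric] mult.commute[of d] power_mult)
  then consider "(-1::'a) ^ d = 1" | "(-1::'a) ^ d = -1"
    using power2_eq_iff by fastforce
  then show ?thesis
  proof cases
    case 1
    then have "(-1::'a) = 1"
      using assms injD[of "\<lambda>x::'a. x ^ d" "-1" 1] by simp
    then show ?thesis
      using 1 by simp
  qed
qed

lemma sum_ff_psi_mult_power:
  fixes c :: "'a::{finite,field}"
  assumes "bij (\<lambda>x::'a. x ^ d)" and "c \<noteq> 0"
  shows "(\<Sum>y\<in>UNIV. ff_psi (c * y ^ d)) = 0"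
  using sum.reindex_bij_betw[OF assms(1), of "\<lambda>y::'a. ff_psi (c * y)"] sum_ff_psi_mult[OF assms(2)]
  by simp

section \<open>The correlation of Weil sums\<close>

lemma sum_ff_W_mult_ff_W:
  fixes b :: "'a::{finite,field}"
  shows "(\<Sum>a\<in>{a::'a. a \<noteq> 0}. ff_W d a * ff_W d (b * a)) =
    of_nat (card (UNIV::'a set)) * (\<Sum>y::'a\<in>UNIV. ff_psi (((-b) ^ d + 1) * y ^ d))
      - (\<Sum>x::'a\<in>UNIV. ff_psi (x ^ d)) ^ 2"
proof -
  let ?q = "of_nat (card (UNIV::'a set)) :: complex"
  have split: "ff_psi (x ^ d + a * x) * ff_psi (y ^ d + (b * a) * y) =
      ff_psi (x ^ d + y ^ d) * ff_psi (a * (x + b * y))" for x y a :: 'a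
    unfolding ff_psi_add[symmetric] by (simp add: algebra_simps)
  have inner: "ff_psi (x ^ d + y ^ d) * (\<Sum>a\<in>{a::'a. a \<noteq> 0}. ff_psi (a * (x + b * y))) =
      (if x = - (b * y) then ?q * ff_psi ((- (b * y)) ^ d + y ^ d) else 0)
        - ff_psi (x ^ d) * ff_psi (y ^ d)" for x y :: 'a
    by (simp add: sum_nonzero_ff_psi_mult add_eq_0_iff2 right_diff_distrib flip: ff_psi_add)
  have "(\<Sum>a\<in>{a::'a. a \<noteq> 0}. ff_W d a * ff_W d (b * a)) =
      (\<Sum>a\<in>{a::'a. a \<noteq> 0}. \<Sum>x\<in>UNIV. \<Sum>y\<in>UNIV. ff_psi (x ^ d + y ^ d) * ff_psi (a * (x + b * y)))"
    unfolding ff_W_def sum_product by (simp only: split)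
  also have "\<dots> =
      (\<Sum>x\<in>UNIV. \<Sum>y\<in>UNIV. ff_psi (x ^ d + y ^ d) * (\<Sum>a\<in>{a::'a. a \<noteq> 0}. ff_psi (a * (x + b * y))))"
    unfolding sum_distrib_left by (simp only: sum.swap[of _ "{a::'a. a \<noteq> 0}"])
  also have "\<dots> = (\<Sum>y\<in>UNIV. ?q * ff_psi ((- (b * y)) ^ d + y ^ d))
      - (\<Sum>x::'a\<in>UNIV. \<Sum>y::'a\<in>UNIV. ff_psi (x ^ d) * ff_psi (y ^ d))"
    unfolding inner sum_subtractf by (subst sum.swap) (simp add: sum.delta')
  also have "(\<Sum>y\<in>UNIV. ?q * ff_psi ((- (b * y)) ^ d + y ^ d)) =
      ?q * (\<Sum>y\<in>UNIV. ff_psi (((-b) ^ d + 1) * y ^ d))"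
    by (simp add: sum_distrib_left distrib_right flip: power_mult_distrib)
  finally show ?thesis
    by (simp add: sum_product power2_eq_square)
qed

theorem lemma5p6:
  fixes d :: nat and b :: "'a::{finite,field}"
  assumes "coprime d (card (UNIV::'a set) - 1)"
    and "b \<noteq> 1"
  shows "(\<Sum>a\<in>{a::'a. a \<noteq> 0}. ff_W d a * ff_W d (b * a)) = 0"
proof (cases "d = 0")
  case True
  show ?thesis
    using ff_psi_add[of "1::'a" 1] unfolding sum_ff_W_mult_ff_W by (simp add: True power2_eq_square)
next
  case False
  then have bij: "bij (\<lambda>x::'a. x ^ d)"
    using bij_power_if_coprime assms(1) by blast
  then have inj: "inj (\<lambda>x::'a. x ^ d)"
    by (rule bij_is_inj)
  have coefficient: "(-b) ^ d + 1 \<noteq> 0"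
  proof
    assume "(-b) ^ d + 1 = 0"
    then have "(-b) ^ d = (-1) ^ d"
      by (simp add: minus_one_power_if_inj_power[OF inj] add_eq_0_iff2)
    then have "-b = -1"
      by (rule injD[OF inj])
    with assms(2) show False
      by simp
  qed
  have "(\<Sum>y::'a\<in>UNIV. ff_psi (y ^ d)) = 0"
    using sum_ff_psi_mult_power[OF bij, of 1] by simp
  then show ?thesis
    unfolding sum_ff_W_mult_ff_W by (simp add: sum_ff_psi_mult_power[OF bij coefficient])
qed

end
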